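(* Let $S$ be a regular semigroup and let $\phi:\mathcal G\to S^1$ be a skeleton mapping on $X$. Then for every $g\in\mathcal G_i$ with $i\ge2$, the elements $g^{\phi,l}$ and $g^{\phi,r}$ are idempotents of $S$.
   Context: Let $X$ be a nonempty set and $X'=\{x':x\in X\}$ a disjoint copy of $X$; let $1$ be a new symbol and $A=X\cup X'\cup\{1\}$ (the anchors), with the involution $1'=1$, $(x)'=x'$, $(x')'=x$ for $x\in X$. For a 5-tuple $g$ write $g=(g^l,g^{la},g^c,g^{ra},g^r)$ (left entry, left anchor, middle entry, right anchor, right entry); the notation iterates, e.g. for $s\in\{l,r\}$, $g^{ls}$ is the $s$-entry of $g^l$ and $g^{lsa}$ is the $s$-anchor of $g^l$. Define $\mathcal G_0=\{1\}$; $\mathcal G_{1,e}=\{g_{xx'}:x\in X\}$ where $g_{xx'}=(1,1,xx',x',1)$ (the middle entry is a formal symbol), and $\mathcal G_{1,d}=\emptyset$. For $i\ge 2$: $\mathcal G_{i,e}=\{(g,(g^{la})',g^l,(g^{ra})',g),\ (g,(g^{ra})',g^l,(g^{la})',g) : g\in\mathcal G_{i-1,e}\}$, and $\mathcal G_{i,d}$ is the set of all $g\in\mathcal G_{i-1}\times A\times\mathcal G_{i-2}\times A\times\mathcal G_{i-1}$ such that $g^l\neq g^r$, $(g^c,g^{la})=(g^{ls},(g^{lsa})')$ for some $s\in\{l,r\}$, and $(g^c,g^{ra})=(g^{rt},(g^{rta})')$ for some $t\in\{l,r\}$; here $\mathcal G_i=\mathcal G_{i,d}\cup\mathcal G_{i,e}$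 for $i\ge1$. Put $\mathcal G^5=\bigcup_{i\ge1}\mathcal G_i$, $\mathcal G=\mathcal G^5\cup A$ (the symbol $1$ is used both as an anchor and as an element of $\mathcal G_0$). $S^1$ denotes $S$ with an identity adjoined if necessary. For a mapping $\phi:\mathcal G\to S^1$ and $g\in\mathcal G^5$ of height $\ge2$ put $g^{\phi,l}=(g^c\phi)((g^{la})'\phi)(g^l\phi)(g^{la}\phi)$ and $g^{\phi,r}=((g^{ra})'\phi)(g^r\phi)(g^{ra}\phi)(g^c\phi)$. For elements $a,b$ of a regular semigroup $T$, the sandwich set is $S(a,b)=\{h\in E(T): (bb')h=h=h(a'a),\ (a'a)h(bb')=(a'a)(bb')\}$ for any inverses $a'$ of $a$, $b'$ of $b$ (independent of the choice). A skeleton mapping (on $X$) is a mapping $\phi:\mathcal G\to S^1$, $S$ a regular semigroup, such that: (i) for every $x\in X$, $x\phi\in S$, $x'\phi$ is an inverse of $x\phi$ (i.e. $(x\phi)(x'\phi)(x\phi)=x\phi$ and $(x'\phi)(x\phi)(x'\phi)=x'\phi$), and $g_{xx'}\phi=(x\phi)(x'\phi)$; (ii) $(1\phi)(a\phi)=a\phi=(a\phi)(1\phi)$ for all $a\in A$; (iii) $g\phi\in S(g^{\phi,r},g^{\phi,l})$ for every $g\in\mathcal G_i$ with $i\ge2$. *)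

theory Defs
  imports Main
begin

text \<open>Anchors: One is the symbol 1, Pos x is x, Neg x is x'.\<close>
datatype 'x anc = One | Pos 'x | Neg 'x

fun aprime :: "'x anc \<Rightarrow> 'x anc" where
  "aprime One = One"
| "aprime (Pos x) = Neg x"
| "aprime (Neg x) = Pos x"

definition anchors :: "'x set \<Rightarrow> 'x anc set" where
  "anchors X = {One} \<union> Pos ` X \<union> Neg ` X"

text \<open>Elements: anchors (the element 1 of G_0 is Anc One), the formal symbol xx'
  (XX x, only used as middle entry of g_xx'), and 5-tuples
  (left entry, left anchor, middle entry, right anchor, right entry).\<close>
datatype 'x gel =
    Anc "'x anc"
  | XX 'x
  | Tup (gl: "'x gel") (gla: "'x anc") (gc: "'x gel") (gra: "'x anc") (gr: "'x gel")

definition gxx :: "'x \<Rightarrow> 'x gel" where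
  "gxx x = Tup (Anc One) One (XX x) (Neg x) (Anc One)"

fun Ge :: "'x set \<Rightarrow> nat \<Rightarrow> 'x gel set" where
  "Ge X 0 = {}"
| "Ge X (Suc 0) = gxx ` X"
| "Ge X (Suc (Suc n)) =
     (\<lambda>g. Tup g (aprime (gla g)) (gl g) (aprime (gra g)) g) ` Ge X (Suc n)
   \<union> (\<lambda>g. Tup g (aprime (gra g)) (gl g) (aprime (gla g)) g) ` Ge X (Suc n)"

text \<open>Gi X i is G_i (G_0 = {1}, G_1 = G_{1,e}, G_i = G_{i,d} \<union> G_{i,e} for i \<ge> 2).\<close>
fun Gi :: "'x set \<Rightarrow> nat \<Rightarrow> 'x gel set" where
  "Gi X 0 = {Anc One}"
| "Gi X (Suc 0) = Ge X (Suc 0)"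
| "Gi X (Suc (Suc n)) = Ge X (Suc (Suc n)) \<union>
     {g. \<exists>l a c b r. g = Tup l a c b r \<and>
          l \<in> Gi X (Suc n) \<and> a \<in> anchors X \<and> c \<in> Gi X n \<and> b \<in> anchors X \<and>
          r \<in> Gi X (Suc n) \<and> l \<noteq> r \<and>
          ((c = gl l \<and> a = aprime (gla l)) \<or> (c = gr l \<and> a = aprime (gra l))) \<and>
          ((c = gl r \<and> b = aprime (gla r)) \<or> (c = gr r \<and> b = aprime (gra r)))}"

text \<open>S is the whole carrier of a type 'a with an associative multiplication;
  S^1 is modelled as 'a option, None being the adjoined identity.\<close>
definition regular_sg :: "'a::semigroup_mult itself \<Rightarrow> bool" where
  "regular_sg _ \<longleftrightarrow> (\<forall>a::'a. \<exists>b. a * b * a = a)"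

fun m1 :: "'a::semigroup_mult option \<Rightarrow> 'a option \<Rightarrow> 'a option" where
  "m1 None y = y"
| "m1 x None = x"
| "m1 (Some a) (Some b) = Some (a * b)"

definition is_inverse1 :: "'a::semigroup_mult option \<Rightarrow> 'a option \<Rightarrow> bool" where
  "is_inverse1 b a \<longleftrightarrow> m1 (m1 a b) a = a \<and> m1 (m1 b a) b = b"

definition idem :: "'a::semigroup_mult option \<Rightarrow> bool" where
  "idem h \<longleftrightarrow> (\<exists>e. h = Some e \<and> e * e = e)"

text \<open>Sandwich set S(a,b) (with inverses a', b'; independent of the choice).\<close>
definition in_sandwich :: "'a::semigroup_mult option \<Rightarrow> 'a option \<Rightarrow> 'a option \<Rightarrow> bool" where
  "in_sandwich h a b \<longleftrightarrow> idem h \<and>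
     (\<exists>a' b'. is_inverse1 a' a \<and> is_inverse1 b' b \<and>
        m1 (m1 b b') h = h \<and> h = m1 h (m1 a' a) \<and>
        m1 (m1 (m1 a' a) h) (m1 b b') = m1 (m1 a' a) (m1 b b'))"

definition phiL :: "('x gel \<Rightarrow> 'a::semigroup_mult option) \<Rightarrow> 'x gel \<Rightarrow> 'a option" where
  "phiL \<phi> g = m1 (m1 (m1 (\<phi> (gc g)) (\<phi> (Anc (aprime (gla g))))) (\<phi> (gl g))) (\<phi> (Anc (gla g)))"

definition phiR :: "('x gel \<Rightarrow> 'a::semigroup_mult option) \<Rightarrow> 'x gel \<Rightarrow> 'a option" where
  "phiR \<phi> g = m1 (m1 (m1 (\<phi> (Anc (aprime (gra g)))) (\<phi> (gr g))) (\<phi> (Anc (gra g)))) (\<phi> (gc g))"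

definition skeleton :: "'x set \<Rightarrow> ('x gel \<Rightarrow> 'a::semigroup_mult option) \<Rightarrow> bool" where
  "skeleton X \<phi> \<longleftrightarrow>
     (\<forall>x\<in>X. \<phi> (Anc (Pos x)) \<noteq> None \<and> \<phi> (Anc (Neg x)) \<noteq> None \<and>
        is_inverse1 (\<phi> (Anc (Neg x))) (\<phi> (Anc (Pos x))) \<and>
        \<phi> (gxx x) = m1 (\<phi> (Anc (Pos x))) (\<phi> (Anc (Neg x)))) \<and>
     (\<forall>a\<in>anchors X. m1 (\<phi> (Anc One)) (\<phi> (Anc a)) = \<phi> (Anc a) \<and>
        m1 (\<phi> (Anc a)) (\<phi> (Anc One)) = \<phi> (Anc a)) \<and>
     (\<forall>i\<ge>2. \<forall>g\<in>Gi X i. in_sandwich (\<phi> g) (phiR \<phi> g) (phiL \<phi> g))"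

end

theory Submission
  imports Defs
begin

text \<open>For \<open>g \<in> G\<^sub>i\<close>, \<open>i \<ge> 2\<close>, the conditions on the middle entry and the anchors make \<open>g\<^sup>\<phi>\<^sup>,\<^sup>l\<close> and
  \<open>g\<^sup>\<phi>\<^sup>,\<^sup>r\<close> products of the form \<open>u e v\<close>, where \<open>e = h\<phi>\<close> for the entry \<open>h = g\<^sup>l\<close> resp.
  \<open>h = g\<^sup>r\<close>, and \<open>v u\<close> is one of the two factors \<open>Z\<close>, \<open>Y\<close> in
  \<open>h\<^sup>\<phi>\<^sup>,\<^sup>l = (h\<^sup>c\<phi>) Z\<close>, \<open>h\<^sup>\<phi>\<^sup>,\<^sup>r = Y (h\<^sup>c\<phi>)\<close>. Such \<open>u e v\<close> is idempotent as soon as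
  \<open>e (v u) e = e\<close>. For \<open>h = g\<^sub>x\<^sub>x\<^sub>'\<close> this is a direct computation; otherwise \<open>e\<close> lies in
  the sandwich set of \<open>h\<^sup>\<phi>\<^sup>,\<^sup>r\<close> and \<open>h\<^sup>\<phi>\<^sup>,\<^sup>l\<close>, which are idempotent by induction on the
  height, so \<open>e\<close> is absorbed by both, and hence \<open>e Z e = e = e Y e\<close> because the
  common factor \<open>h\<^sup>c\<phi>\<close> is idempotent.\<close>

lemma (in semigroup) idem_conjugate:
  assumes "e \<^bold>* (v \<^bold>* u) \<^bold>* e = e"
  shows "(u \<^bold>* e \<^bold>* v) \<^bold>* (u \<^bold>* e \<^bold>* v) = u \<^bold>* e \<^bold>* v"
proof -
  have "(u \<^bold>* e \<^bold>* v) \<^bold>* (u \<^bold>* e \<^bold>* v) = u \<^bold>* (e \<^bold>* (v \<^bold>* u) \<^bold>* e) \<^bold>* v"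
    by (simp only: assoc)
  with assms show ?thesis by simp
qed

lemma (in semigroup) idem_absorbs_left:
  assumes "l \<^bold>* l = l" and "l \<^bold>* p \<^bold>* e = e"
  shows "l \<^bold>* e = e"
  by (metis assms assoc)

lemma (in semigroup) idem_absorbs_right:
  assumes "r \<^bold>* r = r" and "e \<^bold>* p \<^bold>* r = e"
  shows "e \<^bold>* r = e"
  by (metis assms assoc)

lemma (in semigroup) absorbs_through_idem:
  assumes "e \<^bold>* e = e" and "c \<^bold>* c = c" and "c \<^bold>* z \<^bold>* e = e" and "e \<^bold>* (y \<^bold>* c) = e"
  shows "e \<^bold>* z \<^bold>* e = e" and "e \<^bold>* y \<^bold>* e = e"
proof -
  have "e \<^bold>* c = e" by (metis assms(2,4) assoc)
  moreover have "c \<^bold>* e = e" by (metis assms(2,3) assoc)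
  ultimately show "e \<^bold>* z \<^bold>* e = e" and "e \<^bold>* y \<^bold>* e = e"
    by (metis assms assoc)+
qed

notation m1 (infixl "\<cdot>" 70)

interpretation m1: semigroup "m1 :: 'a::semigroup_mult option \<Rightarrow> _"
proof
  show "a \<cdot> b \<cdot> c = a \<cdot> (b \<cdot> c)" for a b c :: "'a option"
    by (cases a; cases b; cases c) (auto simp: mult.assoc)
qed

lemma m1_eq_None_iff: "x \<cdot> y = None \<longleftrightarrow> x = None \<and> y = None"
  by (cases x; cases y) auto

lemma idem_iff: "idem x \<longleftrightarrow> x \<cdot> x = x \<and> x \<noteq> None"
  by (cases x) (auto simp: idem_def)

lemma aprime_aprime [simp]: "aprime (aprime a) = a"
  by (cases a) auto

text \<open>\<open>is_entry c a h\<close> holds iff \<open>(c, a) = (h\<^sup>s, (h\<^sup>s\<^sup>a)')\<close> for some \<open>s \<in> {l, r}\<close>; this is the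
  condition imposed on the middle entry and the anchors of an element of \<open>G\<^sub>i\<^sub>,\<^sub>d\<close>.\<close>
definition is_entry :: "'x gel \<Rightarrow> 'x anc \<Rightarrow> 'x gel \<Rightarrow> bool" where
  "is_entry c a h \<longleftrightarrow> (c = gl h \<and> a = aprime (gla h)) \<or> (c = gr h \<and> a = aprime (gra h))"

lemma Ge_Suc_in_Gi: "h \<in> Ge X (Suc n) \<Longrightarrow> gl h = gr h \<and> gl h \<in> Gi X n \<and> h \<in> Gi X (Suc n)"
proof (induction n arbitrary: h)
  case 0
  then show ?case by (auto simp: gxx_def)
next
  case (Suc n)
  then show ?case by auto
qed

lemma Gi_Suc_Suc_entries:
  assumes "g \<in> Gi X (Suc (Suc n))"
  shows "gl g \<in> Gi X (Suc n)" and "gr g \<in> Gi X (Suc n)" and "gc g \<in> Gi X n"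
    and "is_entry (gc g) (gla g) (gl g)" and "is_entry (gc g) (gra g) (gr g)"
proof -
  have "gl g \<in> Gi X (Suc n) \<and> gr g \<in> Gi X (Suc n) \<and> gc g \<in> Gi X n \<and>
    is_entry (gc g) (gla g) (gl g) \<and> is_entry (gc g) (gra g) (gr g)"
  proof (cases "g \<in> Ge X (Suc (Suc n))")
    case True
    then obtain h where h: "h \<in> Ge X (Suc n)"
      and "g = Tup h (aprime (gla h)) (gl h) (aprime (gra h)) h \<or>
           g = Tup h (aprime (gra h)) (gl h) (aprime (gla h)) h"
      by auto
    with Ge_Suc_in_Gi[OF h] show ?thesis by (auto simp: is_entry_def)
  next
    case False
    with assms obtain l a c b r where "g = Tup l a c b r"
      and "l \<in> Gi X (Suc n)" and "c \<in> Gi X n" and "r \<in> Gi X (Suc n)"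
      and "(c = gl l \<and> a = aprime (gla l)) \<or> (c = gr l \<and> a = aprime (gra l))"
      and "(c = gl r \<and> b = aprime (gla r)) \<or> (c = gr r \<and> b = aprime (gra r))"
      by (simp only: Gi.simps Un_iff mem_Collect_eq) blast
    then show ?thesis by (simp add: is_entry_def)
  qed
  then show "gl g \<in> Gi X (Suc n)" and "gr g \<in> Gi X (Suc n)" and "gc g \<in> Gi X n"
    and "is_entry (gc g) (gla g) (gl g)" and "is_entry (gc g) (gra g) (gr g)"
    by blast+
qed

lemma skeleton_sandwich:
  "skeleton X \<phi> \<Longrightarrow> g \<in> Gi X (Suc (Suc n)) \<Longrightarrow> in_sandwich (\<phi> g) (phiR \<phi> g) (phiL \<phi> g)"
  unfolding skeleton_def by (metis Suc_1 Suc_le_mono le_add1 plus_1_eq_Suc)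

lemma skeleton_value_idem:
  assumes sk: "skeleton X \<phi>" and g: "g \<in> Gi X k"
  shows "\<phi> g \<cdot> \<phi> g = \<phi> g"
proof -
  consider "k = 0" | "k = 1" | n where "k = Suc (Suc n)"
    by (metis One_nat_def not0_implies_Suc)
  then show ?thesis
  proof cases
    case 1
    with g sk show ?thesis by (auto simp: skeleton_def anchors_def)
  next
    case 2
    with g obtain x where "x \<in> X" and "g = gxx x" by auto
    with sk show ?thesis by (auto simp: skeleton_def is_inverse1_def m1.assoc)
  next
    case 3
    with skeleton_sandwich[OF sk] g show ?thesis by (simp add: in_sandwich_def idem_iff)
  qed
qed

definition left_product :: "('x gel \<Rightarrow> 'a::semigroup_mult option) \<Rightarrow> 'x gel \<Rightarrow> 'x anc \<Rightarrow> 'x gel \<Rightarrow> 'a option"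
  where "left_product \<phi> c a h = \<phi> c \<cdot> \<phi> (Anc (aprime a)) \<cdot> \<phi> h \<cdot> \<phi> (Anc a)"

definition right_product :: "('x gel \<Rightarrow> 'a::semigroup_mult option) \<Rightarrow> 'x gel \<Rightarrow> 'x anc \<Rightarrow> 'x gel \<Rightarrow> 'a option"
  where "right_product \<phi> c a h = \<phi> (Anc (aprime a)) \<cdot> \<phi> h \<cdot> \<phi> (Anc a) \<cdot> \<phi> c"

lemma phiL_eq_left_product: "phiL \<phi> g = left_product \<phi> (gc g) (gla g) (gl g)"
  by (simp add: phiL_def left_product_def)

lemma phiR_eq_right_product: "phiR \<phi> g = right_product \<phi> (gc g) (gra g) (gr g)"
  by (simp add: phiR_def right_product_def)

definition entry_products_idem :: "('x gel \<Rightarrow> 'a::semigroup_mult option) \<Rightarrow> 'x gel \<Rightarrow> bool" where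
  "entry_products_idem \<phi> h \<longleftrightarrow> (\<forall>c a. is_entry c a h \<longrightarrow>
     idem (left_product \<phi> c a h) \<and> idem (right_product \<phi> c a h))"

lemma entry_products_idem_if_absorbs:
  assumes "\<phi> h \<noteq> None" and "\<phi> h \<cdot> (\<phi> (Anc a) \<cdot> \<phi> c \<cdot> \<phi> (Anc (aprime a))) \<cdot> \<phi> h = \<phi> h"
  shows "idem (left_product \<phi> c a h) \<and> idem (right_product \<phi> c a h)"
proof -
  let ?e = "\<phi> h" and ?a = "\<phi> (Anc a)" and ?a' = "\<phi> (Anc (aprime a))" and ?c = "\<phi> c"
  have "?e \<cdot> (?a \<cdot> (?c \<cdot> ?a')) \<cdot> ?e = ?e" and "?e \<cdot> ((?a \<cdot> ?c) \<cdot> ?a') \<cdot> ?e = ?e"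
    using assms(2) by (simp_all add: m1.assoc)
  from this[THEN m1.idem_conjugate] assms(1) show ?thesis
    unfolding left_product_def right_product_def idem_iff by (simp add: m1.assoc m1_eq_None_iff)
qed

lemma entry_products_idemI:
  assumes "\<phi> h \<noteq> None"
    and "\<phi> h \<cdot> (\<phi> (Anc (aprime (gla h))) \<cdot> \<phi> (gl h) \<cdot> \<phi> (Anc (gla h))) \<cdot> \<phi> h = \<phi> h"
    and "\<phi> h \<cdot> (\<phi> (Anc (aprime (gra h))) \<cdot> \<phi> (gr h) \<cdot> \<phi> (Anc (gra h))) \<cdot> \<phi> h = \<phi> h"
  shows "entry_products_idem \<phi> h"
  using entry_products_idem_if_absorbs[of \<phi> h "aprime (gla h)" "gl h"]
    entry_products_idem_if_absorbs[of \<phi> h "aprime (gra h)" "gr h"] assms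
  unfolding entry_products_idem_def is_entry_def by auto

lemma entry_products_idem_gxx:
  assumes sk: "skeleton X \<phi>" and x: "x \<in> X"
  shows "entry_products_idem \<phi> (gxx x)"
proof -
  let ?o = "\<phi> (Anc One)" and ?p = "\<phi> (Anc (Pos x))" and ?n = "\<phi> (Anc (Neg x))"
  have sel: "gl (gxx x) = Anc One" "gla (gxx x) = One" "gr (gxx x) = Anc One" "gra (gxx x) = Neg x"
    by (simp_all add: gxx_def)
  have "One \<in> anchors X" and "Pos x \<in> anchors X" and "Neg x \<in> anchors X" using x by (auto simp: anchors_def)
  then have oo: "?o \<cdot> ?o = ?o" and po: "?p \<cdot> ?o = ?p" and no: "?n \<cdot> ?o = ?n"
    using sk by (auto simp: skeleton_def)
  have e: "\<phi> (gxx x) = ?p \<cdot> ?n" and "?p \<noteq> None" and pnp: "?p \<cdot> ?n \<cdot> ?p = ?p"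
    using sk x by (auto simp: skeleton_def is_inverse1_def)
  then have "\<phi> (gxx x) \<noteq> None" by (simp add: m1_eq_None_iff)
  moreover have "?p \<cdot> ?n \<cdot> (?o \<cdot> ?o \<cdot> ?o) \<cdot> (?p \<cdot> ?n) = ?p \<cdot> ?n"
  proof -
    have "?p \<cdot> ?n \<cdot> (?o \<cdot> ?o \<cdot> ?o) \<cdot> (?p \<cdot> ?n) = ?p \<cdot> (?n \<cdot> ?o) \<cdot> ?p \<cdot> ?n"
      using oo by (simp add: m1.assoc)
    also have "\<dots> = ?p \<cdot> ?n" using no pnp by (simp add: m1.assoc)
    finally show ?thesis .
  qed
  moreover have "?p \<cdot> ?n \<cdot> (?p \<cdot> ?o \<cdot> ?n) \<cdot> (?p \<cdot> ?n) = ?p \<cdot> ?n"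
  proof -
    have "?p \<cdot> ?n \<cdot> (?p \<cdot> ?o \<cdot> ?n) \<cdot> (?p \<cdot> ?n) = (?p \<cdot> ?n \<cdot> ?p) \<cdot> ?n \<cdot> ?p \<cdot> ?n"
      using po by (simp add: m1.assoc)
    also have "\<dots> = ?p \<cdot> ?n" using pnp by (simp add: m1.assoc)
    finally show ?thesis .
  qed
  ultimately show ?thesis
    by (intro entry_products_idemI) (simp_all add: e sel)
qed

lemma entry_products_idem_if_idem_phiL_phiR:
  assumes sk: "skeleton X \<phi>" and h: "h \<in> Gi X (Suc (Suc n))"
    and L: "idem (phiL \<phi> h)" and R: "idem (phiR \<phi> h)"
  shows "entry_products_idem \<phi> h"
proof -
  let ?e = "\<phi> h" and ?c = "\<phi> (gc h)"
  let ?Z = "\<phi> (Anc (aprime (gla h))) \<cdot> \<phi> (gl h) \<cdot> \<phi> (Anc (gla h))"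
  let ?Y = "\<phi> (Anc (aprime (gra h))) \<cdot> \<phi> (gr h) \<cdot> \<phi> (Anc (gra h))"
  have sw: "in_sandwich ?e (phiR \<phi> h) (phiL \<phi> h)" by (rule skeleton_sandwich[OF sk h])
  then have "idem ?e" by (simp add: in_sandwich_def)
  then have ee: "?e \<cdot> ?e = ?e" and "?e \<noteq> None" by (simp_all add: idem_iff)
  from sw obtain p q where "phiL \<phi> h \<cdot> p \<cdot> ?e = ?e" and "?e = ?e \<cdot> (q \<cdot> phiR \<phi> h)"
    unfolding in_sandwich_def by blast
  then have "phiL \<phi> h \<cdot> ?e = ?e" and "?e \<cdot> phiR \<phi> h = ?e"
    using L R m1.idem_absorbs_left[of "phiL \<phi> h" p ?e] m1.idem_absorbs_right[of "phiR \<phi> h" ?e q]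
    by (simp_all add: idem_iff m1.assoc)
  moreover have "phiL \<phi> h = ?c \<cdot> ?Z" and "phiR \<phi> h = ?Y \<cdot> ?c"
    by (simp_all add: phiL_def phiR_def m1.assoc)
  moreover have "?c \<cdot> ?c = ?c"
    using skeleton_value_idem[OF sk Gi_Suc_Suc_entries(3)[OF h]] .
  ultimately have "?e \<cdot> ?Z \<cdot> ?e = ?e" and "?e \<cdot> ?Y \<cdot> ?e = ?e"
    using m1.absorbs_through_idem[OF ee] by simp_all
  with \<open>?e \<noteq> None\<close> show ?thesis by (rule entry_products_idemI)
qed

lemma idem_phiL_phiR_if_entry_products_idem:
  assumes "g \<in> Gi X (Suc (Suc n))"
    and "entry_products_idem \<phi> (gl g)" and "entry_products_idem \<phi> (gr g)"
  shows "idem (phiL \<phi> g) \<and> idem (phiR \<phi> g)"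
  using assms Gi_Suc_Suc_entries(4,5)[OF assms(1)]
  by (simp add: phiL_eq_left_product phiR_eq_right_product entry_products_idem_def)

lemma entry_products_idem_Gi:
  assumes sk: "skeleton X \<phi>"
  shows "h \<in> Gi X (Suc k) \<Longrightarrow> entry_products_idem \<phi> h"
proof (induction k arbitrary: h)
  case 0
  then show ?case using entry_products_idem_gxx[OF sk] by auto
next
  case (Suc k)
  then have "idem (phiL \<phi> h) \<and> idem (phiR \<phi> h)"
    by (simp add: idem_phiL_phiR_if_entry_products_idem Gi_Suc_Suc_entries(1,2))
  with Suc.prems show ?case by (simp add: entry_products_idem_if_idem_phiL_phiR[OF sk])
qed

theorem lemma6p1:
  fixes X :: "'x set" and \<phi> :: "'x gel \<Rightarrow> 'a::semigroup_mult option"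
  assumes "X \<noteq> {}"
    and "regular_sg TYPE('a)"
    and "skeleton X \<phi>"
    and "i \<ge> 2" and "g \<in> Gi X i"
  shows "idem (phiL \<phi> g) \<and> idem (phiR \<phi> g)"
proof -
  obtain n where "i = Suc (Suc n)" using \<open>i \<ge> 2\<close> by (metis add_2_eq_Suc le_Suc_ex)
  with \<open>g \<in> Gi X i\<close> have "g \<in> Gi X (Suc (Suc n))" by simp
  then show ?thesis
    using idem_phiL_phiR_if_entry_products_idem Gi_Suc_Suc_entries(1,2)
      entry_products_idem_Gi[OF \<open>skeleton X \<phi>\<close>]
    by blast
qed

end
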